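(* Consider the Quicksort recursive distributional equation $$X\stackrel d=UX_1+(1-U)X_2+C(U)\quad\text{on }\mathbb R,$$ where $C(x)=2x\log x+2(1-x)\log(1-x)+1$, $U$ is uniform on $[0,1]$, and $X_1,X_2$ are i.i.d. copies of $X$ independent of $U$. Let $\nu$ be its unique solution with mean zero and finite variance, let $m\in\mathbb R$, $\sigma\ge0$, and let $\mu=\nu*\mathrm{Cauchy}(m,\sigma^2)$. Then the invariant recursive tree process with marginal $\mu$ is endogenous if and only if $\sigma=0$.
   Context: $*$ denotes convolution. $\mathrm{Cauchy}(m,\sigma^2)$ denotes the distribution on $\mathbb R$ with characteristic function $t\mapsto\exp(imt-\sigma|t|)$ (for $\sigma=0$ this is the point mass at $m$). It is known that each such $\mu$ solves the equation. Recursive tree process: let $\mathbb T$ be the set of finite words in $\{1,2\}$ (root $\emptyset$, children $\mathbf i1,\mathbf i2$), $(U_{\mathbf i})_{\mathbf i\in\mathbb T}$ i.i.d. uniform on $[0,1]$. An invariant RTP with marginal $\mu$ is a family $(X_{\mathbf i})$ of random variables with law $\mu$ such that $X_{\mathbf i}=U_{\mathbf i}X_{\mathbf i1}+(1-U_{\mathbf i})X_{\mathbf i2}+C(U_{\mathbf i})$ a.s. for all $\mathbf i$ and, for each $d$, the generation-$d$ variables are i.i.d. and independent of $(U_{\mathbf i})$ at generations $<d$. It is endogenous if $X_\emptyset$ is $\sigma(U_{\mathbf i},\mathbf i\in\mathbb T)$-measurable. *)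

theory Defs
  imports "HOL-Probability.Probability"
begin

text \<open>The Quicksort toll function C(x) = 2 x log x + 2 (1-x) log (1-x) + 1
  (with the convention 0 log 0 = 0, which holds since ln 0 = 0 in Isabelle).\<close>
definition QS_C :: "real \<Rightarrow> real" where
  "QS_C x = 2 * x * ln x + 2 * (1 - x) * ln (1 - x) + 1"

definition unif01 :: "real measure" where
  "unif01 = uniform_measure lborel {0..1}"

definition QS_fixpoint :: "real measure \<Rightarrow> bool" where
  "QS_fixpoint mu \<longleftrightarrow> real_distribution mu \<and>
     mu = distr (unif01 \<Otimes>\<^sub>M (mu \<Otimes>\<^sub>M mu)) borel
            (\<lambda>(u, (x1, x2)). u * x1 + (1 - u) * x2 + QS_C u)"

definition is_cauchy :: "real \<Rightarrow> real \<Rightarrow> real measure \<Rightarrow> bool" where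
  "is_cauchy m \<sigma> K \<longleftrightarrow> real_distribution K \<and>
     (\<forall>t. char K t = exp (\<i> * complex_of_real (m * t) - complex_of_real (\<sigma> * \<bar>t\<bar>)))"

text \<open>Tree words over {1,2} are encoded as bool lists: child i1 = i @ [False],
  child i2 = i @ [True]; the generation of a word is its length.\<close>

definition invariant_RTP ::
  "'a measure \<Rightarrow> (bool list \<Rightarrow> 'a \<Rightarrow> real) \<Rightarrow> (bool list \<Rightarrow> 'a \<Rightarrow> real) \<Rightarrow> real measure \<Rightarrow> bool" where
  "invariant_RTP M U X mu \<longleftrightarrow>
     prob_space M \<and>
     (\<forall>i. U i \<in> borel_measurable M \<and> distr M borel (U i) = unif01) \<and>
     prob_space.indep_vars M (\<lambda>_. borel) U UNIV \<and>
     (\<forall>i. X i \<in> borel_measurable M \<and> distr M borel (X i) = mu) \<and>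
     (\<forall>i. AE \<omega> in M. X i \<omega> = U i \<omega> * X (i @ [False]) \<omega> + (1 - U i \<omega>) * X (i @ [True]) \<omega>
                            + QS_C (U i \<omega>)) \<and>
     (\<forall>d. prob_space.indep_vars M (\<lambda>_. borel) X {i. length i = d} \<and>
          prob_space.indep_var M
            (PiM {i. length i = d} (\<lambda>_. borel)) (\<lambda>\<omega>. restrict (\<lambda>i. X i \<omega>) {i. length i = d})
            (PiM {i. length i < d} (\<lambda>_. borel)) (\<lambda>\<omega>. restrict (\<lambda>i. U i \<omega>) {i. length i < d}))"

definition U_sigma :: "'a measure \<Rightarrow> (bool list \<Rightarrow> 'a \<Rightarrow> real) \<Rightarrow> 'a measure" where
  "U_sigma M U = sigma (space M) {U i -` B \<inter> space M | i B. B \<in> sets borel}"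

definition endogenous :: "'a measure \<Rightarrow> (bool list \<Rightarrow> 'a \<Rightarrow> real) \<Rightarrow> (bool list \<Rightarrow> 'a \<Rightarrow> real) \<Rightarrow> bool" where
  "endogenous M U X \<longleftrightarrow> (\<exists>g \<in> borel_measurable (U_sigma M U). AE \<omega> in M. X [] \<omega> = g \<omega>)"

end

theory Submission
  imports Defs
begin

text \<open>
  Unfolding the recursion down to generation n writes the root as
  X [] = A n + (\<Sum>|i| = n. L i * X i), where the path weights L i \<ge> 0 sum to 1 and, like the
  accumulated toll A n, are functions of the U's above generation n, while the X i of
  generation n are i.i.d. with law \<mu> and independent of those U's.

  If \<sigma> > 0 then |char \<mu> t| \<le> exp (-\<sigma> |t|), and since the weights sum to 1 the same bound
  holds for the characteristic function of X [] conditionally on the U's above generation n.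
  Approximating the events S of \<sigma>(U) by such events gives
  |E (indicator S * exp (i t X []))| \<le> exp (-\<sigma> |t|) P S, which is impossible if X [] is
  \<sigma>(U)-measurable: for t = 1/\<sigma>, the four events where the real or imaginary part of
  \<plusminus>exp (i t X []) is at least 1/2 cover the sample space, yet each must be null since
  exp (-1) < 1/2.

  If \<sigma> = 0 then \<mu> is \<nu> shifted by m, so it has finite variance v, and
  E ((X [] - m - A n)^2) = v E (\<Sum>|i| = n. (L i)^2) = v (2/3)^n. Hence A n + m \<rightarrow> X []
  almost surely, and the limit is a function of the U's.
\<close>

section \<open>Approximation and conditioning\<close>

lemma (in finite_measure) measure_UN_diff_UN_lessThan_less:
  fixes A :: "nat \<Rightarrow> 'a set"
  assumes A: "range A \<subseteq> sets M" and e: "e > 0"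
  obtains N where "measure M ((\<Union>i. A i) - (\<Union>i<N. A i)) < e"
proof -
  have "(\<lambda>N::nat. measure M (\<Union>i<N. A i)) \<longlonglongrightarrow> measure M (\<Union>N. \<Union>i<N. A i)"
    using A by (intro finite_Lim_measure_incseq monoI UN_mono) auto
  moreover have "(\<Union>N. \<Union>i<N. A i) = (\<Union>i. A i)" by blast
  ultimately obtain N where "measure M (\<Union>i. A i) - measure M (\<Union>i<N. A i) < e"
    using e by (metis LIMSEQ_D abs_minus_commute abs_less_iff order_refl real_norm_def)
  moreover have "measure M ((\<Union>i. A i) - (\<Union>i<N. A i)) = measure M (\<Union>i. A i) - measure M (\<Union>i<N. A i)"
    using A by (intro finite_measure_Diff) auto
  ultimately show ?thesis using that by metis
qed

lemma (in finite_measure) measure_sym_diff_UN_le: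
  assumes "finite I" "A ` I \<subseteq> sets M" "B ` I \<subseteq> sets M"
  shows "measure M (sym_diff (\<Union>i\<in>I. A i) (\<Union>i\<in>I. B i)) \<le> (\<Sum>i\<in>I. measure M (sym_diff (A i) (B i)))"
proof -
  have "measure M (sym_diff (\<Union>i\<in>I. A i) (\<Union>i\<in>I. B i)) \<le> measure M (\<Union>i\<in>I. sym_diff (A i) (B i))"
    using assms by (intro finite_measure_mono) auto
  also have "\<dots> \<le> (\<Sum>i\<in>I. measure M (sym_diff (A i) (B i)))"
    using assms by (intro finite_measure_subadditive_finite) auto
  finally show ?thesis .
qed

lemma (in finite_measure) sym_diff_UN_approx:
  fixes F :: "nat \<Rightarrow> 'a measure" and A :: "nat \<Rightarrow> 'a set"
  assumes sub: "\<And>n. sets (F n) \<subseteq> sets M" and inc: "\<And>n k. n \<le> k \<Longrightarrow> sets (F n) \<subseteq> sets (F k)"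
    and A: "range A \<subseteq> sets M"
    and approx: "\<And>i. \<forall>e>0. \<exists>n. \<exists>T\<in>sets (F n). measure M (sym_diff (A i) T) < e"
  shows "\<forall>e>0. \<exists>n. \<exists>T\<in>sets (F n). measure M (sym_diff (\<Union>i. A i) T) < e"
proof (intro allI impI)
  fix e :: real assume e: "e > 0"
  obtain N where N: "measure M ((\<Union>i. A i) - (\<Union>i<N. A i)) < e / 2"
    using measure_UN_diff_UN_lessThan_less[OF A] e by (metis half_gt_zero)
  define e' where "e' = e / (2 * (real N + 1))"
  have "e' > 0" unfolding e'_def using e by auto
  then have "\<forall>i. \<exists>n. \<exists>T\<in>sets (F n). measure M (sym_diff (A i) T) < e'"
    using approx by blast
  then obtain n T where T: "\<And>i. T i \<in> sets (F (n i))" "\<And>i. measure M (sym_diff (A i) (T i)) < e'"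
    by metis
  define k where "k = Max (n ` {..<N})"
  have "T i \<in> sets (F k)" if "i < N" for i
    using that T(1) inc[of "n i" k] by (auto simp: k_def)
  then have "(\<Union>i<N. T i) \<in> sets (F k)" by (intro sets.finite_UN) auto
  have T_sets: "range T \<subseteq> sets M" using T(1) sub by blast
  have "sym_diff (\<Union>i. A i) (\<Union>i<N. T i)
      \<subseteq> ((\<Union>i. A i) - (\<Union>i<N. A i)) \<union> sym_diff (\<Union>i<N. A i) (\<Union>i<N. T i)" by blast
  then have "measure M (sym_diff (\<Union>i. A i) (\<Union>i<N. T i))
      \<le> measure M ((\<Union>i. A i) - (\<Union>i<N. A i)) + measure M (sym_diff (\<Union>i<N. A i) (\<Union>i<N. T i))"
    using A T_sets by (intro order.trans[OF finite_measure_mono measure_Un_le]) auto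
  also have "measure M (sym_diff (\<Union>i<N. A i) (\<Union>i<N. T i)) \<le> (\<Sum>i<N. measure M (sym_diff (A i) (T i)))"
    using A T_sets by (intro measure_sym_diff_UN_le) auto
  also have "\<dots> \<le> (\<Sum>i<N. e')"
    using T(2) by (intro sum_mono less_imp_le)
  also have "\<dots> \<le> e / 2"
    using e by (simp add: e'_def field_simps)
  finally show "\<exists>n. \<exists>T\<in>sets (F n). measure M (sym_diff (\<Union>i. A i) T) < e"
    using N \<open>(\<Union>i<N. T i) \<in> sets (F k)\<close> by (intro bexI exI) auto
qed

lemma (in finite_measure) sigma_sets_UN_incseq_approx:
  fixes F :: "nat \<Rightarrow> 'a measure"
  assumes sub: "\<And>n. sets (F n) \<subseteq> sets M" and space: "\<And>n. space (F n) = space M"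
    and inc: "\<And>n k. n \<le> k \<Longrightarrow> sets (F n) \<subseteq> sets (F k)"
    and S: "S \<in> sigma_sets (space M) (\<Union>n. sets (F n))"
  shows "\<forall>e>0. \<exists>n. \<exists>T\<in>sets (F n). measure M (sym_diff S T) < e"
proof -
  have generated_sets: "sigma_sets (space M) (\<Union>n. sets (F n)) \<subseteq> sets M"
    using sub by (intro sets.sigma_sets_subset) auto
  from S show ?thesis
  proof (induction rule: sigma_sets.induct)
    case (Basic A)
    then show ?case by (metis Diff_cancel Un_absorb UN_iff measure_empty)
  next
    case Empty
    then show ?case by (metis Diff_cancel Un_absorb measure_empty sets.empty_sets)
  next
    case (Compl A)
    have "A \<subseteq> space M" using Compl.hyps generated_sets sets.sets_into_space by blast
    show ?case
    proof (intro allI impI)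
      fix e :: real assume "e > 0"
      with Compl.IH obtain n T where T: "T \<in> sets (F n)" "measure M (sym_diff A T) < e" by blast
      have "T \<subseteq> space M" using T(1) sets.sets_into_space space by metis
      then have "sym_diff (space M - A) (space M - T) = sym_diff A T"
        using \<open>A \<subseteq> space M\<close> by blast
      moreover have "space M - T \<in> sets (F n)" using T(1) space by (metis sets.compl_sets)
      ultimately show "\<exists>n. \<exists>T\<in>sets (F n). measure M (sym_diff (space M - A) T) < e"
        using T(2) by metis
    qed
  next
    case (Union A)
    then show ?case
      using generated_sets by (intro sym_diff_UN_approx[OF sub inc]) auto
  qed
qed

lemma (in finite_measure) norm_integral_indicator_diff_le:
  fixes f :: "'a \<Rightarrow> complex"
  assumes [measurable]: "S \<in> sets M" "T \<in> sets M" "f \<in> borel_measurable M"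
    and bounded: "\<And>x. norm (f x) \<le> 1"
  shows "norm ((\<integral>x. complex_of_real (indicator S x) * f x \<partial>M) - (\<integral>x. complex_of_real (indicator T x) * f x \<partial>M))
    \<le> measure M (sym_diff S T)"
proof -
  have integrable: "integrable M (\<lambda>x. complex_of_real (indicator A x) * f x)" if [measurable]: "A \<in> sets M" for A
    using bounded by (intro integrable_const_bound[where B=1]) (auto simp: norm_mult indicator_def)
  have "(\<integral>x. complex_of_real (indicator S x) * f x \<partial>M) - (\<integral>x. complex_of_real (indicator T x) * f x \<partial>M)
      = (\<integral>x. complex_of_real (indicator S x - indicator T x) * f x \<partial>M)"
    by (simp add: integrable left_diff_distrib)
  also have "norm \<dots> \<le> (\<integral>x. norm (complex_of_real (indicator S x - indicator T x) * f x) \<partial>M)"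
    by (rule integral_norm_bound)
  also have "\<dots> \<le> (\<integral>x. indicator (sym_diff S T) x \<partial>M)"
  proof (rule integral_mono)
    show "integrable M (\<lambda>x. norm (complex_of_real (indicator S x - indicator T x) * f x))"
      using integrable[of S] integrable[of T] by (simp add: left_diff_distrib)
    show "integrable M (indicator (sym_diff S T) :: 'a \<Rightarrow> real)"
      by (simp add: emeasure_eq_measure)
  qed (use bounded in \<open>auto simp: norm_mult indicator_def\<close>)
  finally show ?thesis by simp
qed

lemma (in prob_space) AE_less_of_set_integral_le:
  fixes f :: "'a \<Rightarrow> real"
  assumes N: "subalgebra M N" and [measurable]: "f \<in> borel_measurable N" and "integrable M f"
    and le: "\<And>S. S \<in> sets N \<Longrightarrow> (\<integral>x. indicator S x * f x \<partial>M) \<le> e * prob S" and "e < c"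
  shows "AE x in M. f x < c"
proof -
  define S where "S = {x \<in> space M. c \<le> f x}"
  have space_N: "space N = space M" and sets_N: "sets N \<subseteq> sets M"
    using N by (auto simp: subalgebra_def)
  have "S \<in> sets N" unfolding S_def space_N[symmetric] by measurable
  then have [measurable]: "S \<in> sets M" using sets_N by blast
  have "c * prob S = (\<integral>x. indicator S x * c \<partial>M)" by simp
  also have "\<dots> \<le> (\<integral>x. indicator S x * f x \<partial>M)"
  proof (rule integral_mono)
    show "integrable M (\<lambda>x. indicator S x * c)"
      by (intro integrable_mult_left integrable_real_indicator) (simp_all add: emeasure_eq_measure)
    show "integrable M (\<lambda>x. indicator S x * f x)"
      using integrable_mult_indicator[of S M f] \<open>integrable M f\<close> by simp
  qed (auto simp: S_def indicator_def)
  also have "\<dots> \<le> e * prob S" by (rule le) fact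
  finally have "(c - e) * prob S \<le> 0"
    by (simp add: left_diff_distrib)
  then have "prob S = 0"
    using \<open>e < c\<close> measure_nonneg[of M S] by (auto simp: mult_le_0_iff)
  then have "AE x in M. x \<notin> S" by (simp add: prob_eq_0)
  then show ?thesis using AE_space by eventually_elim (auto simp: S_def)
qed

lemma (in prob_space) nn_integral_indep_var:
  assumes ind: "indep_var MA Y MB Z" and F: "F \<in> borel_measurable (MA \<Otimes>\<^sub>M MB)"
  shows "(\<integral>\<^sup>+\<omega>. F (Y \<omega>, Z \<omega>) \<partial>M) = (\<integral>\<^sup>+z. (\<integral>\<^sup>+\<omega>. F (Y \<omega>, z) \<partial>M) \<partial>distr M MB Z)"
proof -
  have [measurable]: "Y \<in> measurable M MA" "Z \<in> measurable M MB"
    and joint: "distr M (MA \<Otimes>\<^sub>M MB) (\<lambda>\<omega>. (Y \<omega>, Z \<omega>)) = distr M MA Y \<Otimes>\<^sub>M distr M MB Z"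
    using ind by (simp_all add: indep_var_distribution_eq)
  interpret DY: prob_space "distr M MA Y" by (rule prob_space_distr) simp
  interpret DZ: prob_space "distr M MB Z" by (rule prob_space_distr) simp
  interpret pair_prob_space "distr M MA Y" "distr M MB Z" ..
  have "F \<in> borel_measurable (distr M MA Y \<Otimes>\<^sub>M distr M MB Z)"
    using F by (simp add: measurable_def sets_pair_measure_cong[of "distr M MA Y" MA "distr M MB Z" MB]
        space_pair_measure)
  have "(\<integral>\<^sup>+\<omega>. F (Y \<omega>, Z \<omega>) \<partial>M) = (\<integral>\<^sup>+p. F p \<partial>distr M (MA \<Otimes>\<^sub>M MB) (\<lambda>\<omega>. (Y \<omega>, Z \<omega>)))"
    using F by (simp add: nn_integral_distr)
  also have "\<dots> = (\<integral>\<^sup>+p. F p \<partial>(distr M MA Y \<Otimes>\<^sub>M distr M MB Z))"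
    by (simp add: joint)
  also have "\<dots> = (\<integral>\<^sup>+z. (\<integral>\<^sup>+y. F (y, z) \<partial>distr M MA Y) \<partial>distr M MB Z)"
    by (rule nn_integral_snd[symmetric]) fact
  also have "\<dots> = (\<integral>\<^sup>+z. (\<integral>\<^sup>+\<omega>. F (Y \<omega>, z) \<partial>M) \<partial>distr M MB Z)"
    using F by (intro nn_integral_cong) (simp add: nn_integral_distr)
  finally show ?thesis .
qed

lemma (in prob_space) integral_indep_var:
  fixes F :: "_ \<Rightarrow> 'b::{banach, second_countable_topology}"
  assumes ind: "indep_var MA Y MB Z" and F: "F \<in> borel_measurable (MA \<Otimes>\<^sub>M MB)"
    and bounded: "\<And>p. norm (F p) \<le> B"
  shows "(\<integral>\<omega>. F (Y \<omega>, Z \<omega>) \<partial>M) = (\<integral>z. (\<integral>\<omega>. F (Y \<omega>, z) \<partial>M) \<partial>distr M MB Z)"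
proof -
  have [measurable]: "Y \<in> measurable M MA" "Z \<in> measurable M MB"
    and joint: "distr M (MA \<Otimes>\<^sub>M MB) (\<lambda>\<omega>. (Y \<omega>, Z \<omega>)) = distr M MA Y \<Otimes>\<^sub>M distr M MB Z"
    using ind by (simp_all add: indep_var_distribution_eq)
  interpret DY: prob_space "distr M MA Y" by (rule prob_space_distr) simp
  interpret DZ: prob_space "distr M MB Z" by (rule prob_space_distr) simp
  interpret pair_prob_space "distr M MA Y" "distr M MB Z" ..
  have "F \<in> borel_measurable (distr M MA Y \<Otimes>\<^sub>M distr M MB Z)"
    using F by (simp add: measurable_def sets_pair_measure_cong[of "distr M MA Y" MA "distr M MB Z" MB]
        space_pair_measure)
  then have int: "integrable (distr M MA Y \<Otimes>\<^sub>M distr M MB Z) F"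
    using bounded by (intro integrable_const_bound[where B=B]) auto
  have "(\<integral>\<omega>. F (Y \<omega>, Z \<omega>) \<partial>M) = (\<integral>p. F p \<partial>distr M (MA \<Otimes>\<^sub>M MB) (\<lambda>\<omega>. (Y \<omega>, Z \<omega>)))"
    using F by (simp add: integral_distr)
  also have "\<dots> = (\<integral>p. F p \<partial>(distr M MA Y \<Otimes>\<^sub>M distr M MB Z))"
    by (simp add: joint)
  also have "\<dots> = (\<integral>z. (\<integral>y. F (y, z) \<partial>distr M MA Y) \<partial>distr M MB Z)"
    using integral_snd[of "\<lambda>y z. F (y, z)"] int by simp
  also have "\<dots> = (\<integral>z. (\<integral>\<omega>. F (Y \<omega>, z) \<partial>M) \<partial>distr M MB Z)"
    using F by (intro Bochner_Integration.integral_cong refl) (simp add: integral_distr)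
  finally show ?thesis .
qed

section \<open>Path weights on the binary tree\<close>

text \<open>Clamping makes the weights lie in [0,1] for every argument; on the support of
  the uniform law it changes nothing.\<close>

definition clamp01 :: "real \<Rightarrow> real" where
  "clamp01 x = max 0 (min 1 x)"

definition branch_weight :: "real \<Rightarrow> bool \<Rightarrow> real" where
  "branch_weight x b = (if b then 1 - clamp01 x else clamp01 x)"

definition path_weight :: "(bool list \<Rightarrow> real) \<Rightarrow> bool list \<Rightarrow> real" where
  "path_weight u i = (\<Prod>k<length i. branch_weight (u (take k i)) (i ! k))"

definition generation :: "nat \<Rightarrow> bool list set" where
  "generation n = {i. length i = n}"

definition below_generation :: "nat \<Rightarrow> bool list set" where
  "below_generation n = {i. length i < n}"

definition accumulated_toll :: "(bool list \<Rightarrow> real) \<Rightarrow> nat \<Rightarrow> real" where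
  "accumulated_toll u n = (\<Sum>j\<in>below_generation n. path_weight u j * QS_C (clamp01 (u j)))"

lemma clamp01_bounds: "0 \<le> clamp01 x" "clamp01 x \<le> 1"
  unfolding clamp01_def by auto

lemma clamp01_id: "x \<in> {0..1} \<Longrightarrow> clamp01 x = x"
  unfolding clamp01_def by auto

lemma branch_weight_bounds: "0 \<le> branch_weight x b" "branch_weight x b \<le> 1"
  unfolding branch_weight_def using clamp01_bounds[of x] by auto

lemma path_weight_Nil [simp]: "path_weight u [] = 1"
  unfolding path_weight_def by simp

lemma path_weight_snoc: "path_weight u (i @ [b]) = path_weight u i * branch_weight (u i) b"
proof -
  have "path_weight u (i @ [b])
      = (\<Prod>k<length i. branch_weight (u (take k (i @ [b]))) ((i @ [b]) ! k)) * branch_weight (u i) b"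
    unfolding path_weight_def by simp
  also have "(\<Prod>k<length i. branch_weight (u (take k (i @ [b]))) ((i @ [b]) ! k)) = path_weight u i"
    unfolding path_weight_def by (intro prod.cong) (auto simp: nth_append)
  finally show ?thesis .
qed

lemma path_weight_nonneg: "0 \<le> path_weight u i"
  unfolding path_weight_def by (intro prod_nonneg) (auto intro: branch_weight_bounds)

lemma path_weight_le_1: "path_weight u i \<le> 1"
  unfolding path_weight_def by (intro prod_le_1) (auto intro: branch_weight_bounds)

lemma path_weight_cong: "(\<And>j. length j < length i \<Longrightarrow> u j = v j) \<Longrightarrow> path_weight u i = path_weight v i"
  unfolding path_weight_def by (intro prod.cong) auto

lemma finite_generation [simp]: "finite (generation n)"
  using finite_lists_length_eq[of "UNIV :: bool set" n] by (simp add: generation_def)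

lemma finite_below_generation [simp]: "finite (below_generation n)"
  using finite_lists_length_le[of "UNIV :: bool set" n]
  by (rule rev_finite_subset) (auto simp: below_generation_def)

lemma generation_0: "generation 0 = {[]}"
  unfolding generation_def by auto

lemma sum_generation_Suc:
  "(\<Sum>i\<in>generation (Suc n). f i) = (\<Sum>i\<in>generation n. f (i @ [False]) + f (i @ [True]))"
proof -
  have "generation (Suc n) = (\<lambda>i. i @ [False]) ` generation n \<union> (\<lambda>i. i @ [True]) ` generation n"
    by (auto simp: generation_def image_iff length_Suc_conv_rev)
  moreover have "(\<lambda>i. i @ [False]) ` generation n \<inter> (\<lambda>i. i @ [True]) ` generation n = {}"
    by auto
  ultimately have "(\<Sum>i\<in>generation (Suc n). f i)
      = (\<Sum>i\<in>(\<lambda>i. i @ [False]) ` generation n. f i) + (\<Sum>i\<in>(\<lambda>i. i @ [True]) ` generation n. f i)"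
    by (simp add: sum.union_disjoint)
  also have "\<dots> = (\<Sum>i\<in>generation n. f (i @ [False])) + (\<Sum>i\<in>generation n. f (i @ [True]))"
    by (simp add: sum.reindex inj_on_def)
  finally show ?thesis by (simp add: sum.distrib)
qed

lemma sum_path_weight_generation: "(\<Sum>i\<in>generation n. path_weight u i) = 1"
proof (induction n)
  case 0
  then show ?case by (simp add: generation_0)
next
  case (Suc n)
  then show ?case
    by (simp add: sum_generation_Suc path_weight_snoc branch_weight_def flip: distrib_left)
qed

lemma accumulated_toll_Suc:
  "accumulated_toll u (Suc n)
     = accumulated_toll u n + (\<Sum>i\<in>generation n. path_weight u i * QS_C (clamp01 (u i)))"
proof -
  have "below_generation (Suc n) = below_generation n \<union> generation n"
    "below_generation n \<inter> generation n = {}"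
    by (auto simp: below_generation_def generation_def)
  then show ?thesis unfolding accumulated_toll_def by (simp add: sum.union_disjoint)
qed

lemma accumulated_toll_cong:
  "(\<And>j. length j < n \<Longrightarrow> u j = v j) \<Longrightarrow> accumulated_toll u n = accumulated_toll v n"
  unfolding accumulated_toll_def below_generation_def by (intro sum.cong refl) (auto intro!: path_weight_cong)

lemma root_eq_accumulated_toll_plus_generation:
  assumes "\<And>i. x i = clamp01 (u i) * x (i @ [False]) + (1 - clamp01 (u i)) * x (i @ [True]) + QS_C (clamp01 (u i))"
  shows "x [] = accumulated_toll u n + (\<Sum>i\<in>generation n. path_weight u i * x i)"
proof (induction n)
  case 0
  then show ?case by (simp add: generation_0 accumulated_toll_def below_generation_def)
next
  case (Suc n)
  have "(\<Sum>i\<in>generation n. path_weight u i * x i)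
      = (\<Sum>i\<in>generation (Suc n). path_weight u i * x i)
        + (\<Sum>i\<in>generation n. path_weight u i * QS_C (clamp01 (u i)))"
    unfolding sum_generation_Suc sum.distrib[symmetric]
    by (intro sum.cong refl, subst assms) (simp add: path_weight_snoc branch_weight_def algebra_simps)
  then show ?case
    using Suc by (simp add: accumulated_toll_Suc)
qed

lemma clamp01_measurable [measurable]: "clamp01 \<in> borel_measurable borel"
  unfolding clamp01_def by measurable

lemma QS_C_measurable [measurable]: "QS_C \<in> borel_measurable borel"
  unfolding QS_C_def by measurable

lemma branch_weight_measurable [measurable]: "(\<lambda>x. branch_weight x b) \<in> borel_measurable borel"
  unfolding branch_weight_def by measurable

lemma path_weight_measurable:
  "(\<And>j. length j < length i \<Longrightarrow> (\<lambda>x. f x j) \<in> borel_measurable N)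
    \<Longrightarrow> (\<lambda>x. path_weight (f x) i) \<in> borel_measurable N"
  unfolding path_weight_def
  by (intro borel_measurable_prod measurable_compose[OF _ branch_weight_measurable]) auto

lemma accumulated_toll_measurable:
  "(\<And>j. length j < n \<Longrightarrow> (\<lambda>x. f x j) \<in> borel_measurable N)
    \<Longrightarrow> (\<lambda>x. accumulated_toll (f x) n) \<in> borel_measurable N"
  unfolding accumulated_toll_def below_generation_def
  by (intro borel_measurable_sum borel_measurable_times path_weight_measurable
      measurable_compose[OF _ QS_C_measurable] measurable_compose[OF _ clamp01_measurable]) auto

abbreviation below_space :: "nat \<Rightarrow> (bool list \<Rightarrow> real) measure" where
  "below_space n \<equiv> PiM (below_generation n) (\<lambda>_. borel)"

abbreviation generation_space :: "nat \<Rightarrow> (bool list \<Rightarrow> real) measure" where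
  "generation_space n \<equiv> PiM (generation n) (\<lambda>_. borel)"

lemma path_weight_measurable_below_space:
  "length i \<le> n \<Longrightarrow> (\<lambda>u. path_weight u i) \<in> borel_measurable (below_space n)"
  by (intro path_weight_measurable measurable_component_singleton) (auto simp: below_generation_def)

lemma accumulated_toll_measurable_below_space:
  "(\<lambda>u. accumulated_toll u n) \<in> borel_measurable (below_space n)"
  by (intro accumulated_toll_measurable measurable_component_singleton) (auto simp: below_generation_def)

locale qs_rtp = prob_space M for M :: "'a measure" +
  fixes U X :: "bool list \<Rightarrow> 'a \<Rightarrow> real" and mu :: "real measure"
  assumes U_measurable [measurable]: "\<And>i. U i \<in> borel_measurable M"
    and distr_U: "\<And>i. distr M borel (U i) = unif01"
    and indep_U: "indep_vars (\<lambda>_. borel) U UNIV"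
    and X_measurable [measurable]: "\<And>i. X i \<in> borel_measurable M"
    and distr_X: "\<And>i. distr M borel (X i) = mu"
    and X_recursion: "\<And>i. AE \<omega> in M. X i \<omega> = U i \<omega> * X (i @ [False]) \<omega> + (1 - U i \<omega>) * X (i @ [True]) \<omega> + QS_C (U i \<omega>)"
    and indep_X_generation: "\<And>d. indep_vars (\<lambda>_. borel) X {i. length i = d}"
    and indep_X_generation_U_below: "\<And>d. indep_var
      (PiM {i. length i = d} (\<lambda>_. borel)) (\<lambda>\<omega>. restrict (\<lambda>i. X i \<omega>) {i. length i = d})
      (PiM {i. length i < d} (\<lambda>_. borel)) (\<lambda>\<omega>. restrict (\<lambda>i. U i \<omega>) {i. length i < d})"

lemma invariant_RTP_imp_qs_rtp: "invariant_RTP M U X mu \<Longrightarrow> qs_rtp M U X mu"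
  unfolding invariant_RTP_def qs_rtp_def qs_rtp_axioms_def by blast

context qs_rtp
begin

definition U_below :: "nat \<Rightarrow> 'a \<Rightarrow> bool list \<Rightarrow> real" where
  "U_below n \<omega> = restrict (\<lambda>j. U j \<omega>) (below_generation n)"

definition X_generation :: "nat \<Rightarrow> 'a \<Rightarrow> bool list \<Rightarrow> real" where
  "X_generation n \<omega> = restrict (\<lambda>j. X j \<omega>) (generation n)"

lemma U_below_measurable [measurable]: "U_below n \<in> measurable M (below_space n)"
  unfolding U_below_def by measurable

lemma X_generation_measurable [measurable]: "X_generation n \<in> measurable M (generation_space n)"
  unfolding X_generation_def by measurable

lemma indep_var_X_generation_U_below:
  "indep_var (generation_space n) (X_generation n) (below_space n) (U_below n)"
  using indep_X_generation_U_below[of n]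
  unfolding X_generation_def U_below_def generation_def below_generation_def .

lemma path_weight_U_below: "length i \<le> n \<Longrightarrow> path_weight (U_below n \<omega>) i = path_weight (\<lambda>j. U j \<omega>) i"
  unfolding U_below_def by (intro path_weight_cong) (auto simp: below_generation_def)

lemma accumulated_toll_U_below: "accumulated_toll (U_below n \<omega>) n = accumulated_toll (\<lambda>j. U j \<omega>) n"
  unfolding U_below_def by (intro accumulated_toll_cong) (auto simp: below_generation_def)

lemma AE_U_unit_interval: "AE \<omega> in M. \<forall>i. U i \<omega> \<in> {0..1}"
proof (subst AE_all_countable, intro allI)
  fix i
  have "AE x in distr M borel (U i). x \<in> {0..1}"
    unfolding distr_U unif01_def by (intro AE_uniform_measureI) auto
  then show "AE \<omega> in M. U i \<omega> \<in> {0..1}"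
    by (rule AE_distrD[rotated]) simp
qed

lemma AE_root_eq_accumulated_toll_plus_generation:
  "AE \<omega> in M. \<forall>n. X [] \<omega> = accumulated_toll (\<lambda>j. U j \<omega>) n
     + (\<Sum>i\<in>generation n. path_weight (\<lambda>j. U j \<omega>) i * X i \<omega>)"
proof -
  have "AE \<omega> in M. \<forall>i. X i \<omega> = U i \<omega> * X (i @ [False]) \<omega> + (1 - U i \<omega>) * X (i @ [True]) \<omega> + QS_C (U i \<omega>)"
    using X_recursion by (subst AE_all_countable) auto
  with AE_U_unit_interval show ?thesis
  proof eventually_elim
    case (elim \<omega>)
    have clamp: "clamp01 (U i \<omega>) = U i \<omega>" for i
      using elim(1) by (simp add: clamp01_id)
    have "X i \<omega> = clamp01 (U i \<omega>) * X (i @ [False]) \<omega> + (1 - clamp01 (U i \<omega>)) * X (i @ [True]) \<omega>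
        + QS_C (clamp01 (U i \<omega>))" for i
      unfolding clamp using elim(2) by blast
    then show ?case
      by (intro allI root_eq_accumulated_toll_plus_generation)
  qed
qed

lemma AE_root_eq_below_generation:
  "AE \<omega> in M. X [] \<omega> = accumulated_toll (U_below n \<omega>) n
     + (\<Sum>i\<in>generation n. path_weight (U_below n \<omega>) i * X_generation n \<omega> i)"
  using AE_root_eq_accumulated_toll_plus_generation
  by eventually_elim (simp add: accumulated_toll_U_below path_weight_U_below X_generation_def generation_def)

end

section \<open>Decay of the characteristic function prevents endogeny\<close>

lemma iexp_measurable [measurable]: "iexp \<in> borel_measurable borel"
  by (intro borel_measurable_continuous_onI continuous_intros)

lemma exp_minus_one_less_half: "exp (-1::real) < 1/2"
proof -
  have "1 + 1 + (1::real)\<^sup>2 / 2 \<le> exp 1" by (rule exp_lower_Taylor_quadratic) simp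
  then show ?thesis by (simp add: exp_minus field_simps)
qed

lemma one_le_abs_cos_plus_abs_sin: "1 \<le> \<bar>cos x\<bar> + \<bar>sin (x::real)\<bar>"
proof -
  have square_le_abs: "y\<^sup>2 \<le> \<bar>y\<bar>" if "\<bar>y\<bar> \<le> 1" for y :: real
  proof -
    have "y\<^sup>2 = \<bar>y\<bar> * \<bar>y\<bar>" by (simp add: power2_eq_square)
    also have "\<dots> \<le> \<bar>y\<bar>" using that by (intro mult_left_le) auto
    finally show ?thesis .
  qed
  show ?thesis
    using square_le_abs[OF abs_cos_le_one[of x]] square_le_abs[OF abs_sin_le_one[of x]] sin_cos_squared_add[of x]
    by linarith
qed

context qs_rtp
begin

lemma integral_iexp_X: "(\<integral>\<omega>. iexp (s * X i \<omega>) \<partial>M) = char mu s"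
  unfolding char_def distr_X[of i, symmetric] by (simp add: integral_distr)

text \<open>Conditionally on the variables above generation n, the root is a convex combination of
  the independent generation-n values plus a constant, so its characteristic function
  inherits the decay of that of mu.\<close>

lemma norm_integral_iexp_generation_le:
  assumes char_decay: "\<And>s. norm (char mu s) \<le> exp (- c * \<bar>s\<bar>)"
  shows "norm (\<integral>\<omega>. (\<Prod>i\<in>generation n. iexp (t * path_weight u i * X i \<omega>)) \<partial>M) \<le> exp (- c * \<bar>t\<bar>)"
proof -
  have "indep_vars (\<lambda>_. borel) (\<lambda>i \<omega>. iexp (t * path_weight u i * X i \<omega>)) (generation n)"
    using indep_X_generation[of n] unfolding generation_def
    by (rule indep_vars_compose2[where Y="\<lambda>i x. iexp (t * path_weight u i * x)"]) measurable
  then have "(\<integral>\<omega>. (\<Prod>i\<in>generation n. iexp (t * path_weight u i * X i \<omega>)) \<partial>M)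
      = (\<Prod>i\<in>generation n. (\<integral>\<omega>. iexp (t * path_weight u i * X i \<omega>) \<partial>M))"
    by (intro indep_vars_lebesgue_integral integrable_iexp) auto
  also have "\<dots> = (\<Prod>i\<in>generation n. char mu (t * path_weight u i))"
    by (intro prod.cong refl integral_iexp_X)
  finally have "norm (\<integral>\<omega>. (\<Prod>i\<in>generation n. iexp (t * path_weight u i * X i \<omega>)) \<partial>M)
      = (\<Prod>i\<in>generation n. norm (char mu (t * path_weight u i)))"
    by (simp add: prod_norm)
  also have "\<dots> \<le> (\<Prod>i\<in>generation n. exp (- c * \<bar>t\<bar> * path_weight u i))"
    by (intro prod_mono conjI norm_ge_zero order.trans[OF char_decay])
      (simp add: abs_mult path_weight_nonneg mult.assoc)
  also have "\<dots> = exp (- c * \<bar>t\<bar> * (\<Sum>i\<in>generation n. path_weight u i))"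
    by (simp add: exp_sum sum_distrib_left)
  finally show ?thesis by (simp add: sum_path_weight_generation)
qed

lemma integral_iexp_root_below_event:
  assumes B [measurable]: "B \<in> sets (below_space n)"
  shows "(\<integral>\<omega>. complex_of_real (indicator (U_below n -` B \<inter> space M) \<omega>) * iexp (t * X [] \<omega>) \<partial>M)
    = (\<integral>u. complex_of_real (indicator B u) * iexp (t * accumulated_toll u n)
          * (\<integral>\<omega>. (\<Prod>i\<in>generation n. iexp (t * path_weight u i * X i \<omega>)) \<partial>M)
        \<partial>distr M (below_space n) (U_below n))"
proof -
  define F where "F p = complex_of_real (indicator B (snd p)) * iexp (t * accumulated_toll (snd p) n)
    * (\<Prod>i\<in>generation n. iexp (t * path_weight (snd p) i * fst p i))"
    for p :: "(bool list \<Rightarrow> real) \<times> (bool list \<Rightarrow> real)"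
  have [measurable]: "(\<lambda>u. accumulated_toll u n) \<in> borel_measurable (below_space n)"
    by (rule accumulated_toll_measurable_below_space)
  have [measurable]: "(\<lambda>u. path_weight u i) \<in> borel_measurable (below_space n)" if "i \<in> generation n" for i
    using that by (intro path_weight_measurable_below_space) (simp add: generation_def)
  have F_measurable [measurable]: "F \<in> borel_measurable (generation_space n \<Otimes>\<^sub>M below_space n)"
    unfolding F_def by measurable
  have F_bounded: "norm (F p) \<le> 1" for p
    by (simp add: F_def norm_mult prod_norm[symmetric] indicator_def)
  have "AE \<omega> in M. complex_of_real (indicator (U_below n -` B \<inter> space M) \<omega>) * iexp (t * X [] \<omega>)
      = F (X_generation n \<omega>, U_below n \<omega>)"
    using AE_space AE_root_eq_below_generation[of n]
    by eventually_elim (simp add: F_def indicator_def distrib_left exp_add exp_sum sum_distrib_left mult.assoc)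
  then have "(\<integral>\<omega>. complex_of_real (indicator (U_below n -` B \<inter> space M) \<omega>) * iexp (t * X [] \<omega>) \<partial>M)
      = (\<integral>\<omega>. F (X_generation n \<omega>, U_below n \<omega>) \<partial>M)"
    by (intro integral_cong_AE) measurable
  also have "\<dots> = (\<integral>u. (\<integral>\<omega>. F (X_generation n \<omega>, u) \<partial>M) \<partial>distr M (below_space n) (U_below n))"
    by (rule integral_indep_var[OF indep_var_X_generation_U_below F_measurable F_bounded])
  finally show ?thesis
    by (simp add: F_def X_generation_def)
qed

lemma norm_integral_iexp_root_below_event_le:
  assumes char_decay: "\<And>s. norm (char mu s) \<le> exp (- c * \<bar>s\<bar>)"
    and B [measurable]: "B \<in> sets (below_space n)"
  shows "norm (\<integral>\<omega>. complex_of_real (indicator (U_below n -` B \<inter> space M) \<omega>) * iexp (t * X [] \<omega>) \<partial>M)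
    \<le> exp (- c * \<bar>t\<bar>) * prob (U_below n -` B \<inter> space M)"
proof -
  have "norm (complex_of_real (indicator B u) * iexp (t * accumulated_toll u n)
      * (\<integral>\<omega>. (\<Prod>i\<in>generation n. iexp (t * path_weight u i * X i \<omega>)) \<partial>M)) \<le> indicator B u * exp (- c * \<bar>t\<bar>)" for u
    using norm_integral_iexp_generation_le[OF char_decay, where n=n and t=t and u=u]
    by (simp add: norm_mult indicator_def)
  moreover have "integrable (distr M (below_space n) (U_below n)) (\<lambda>u. indicator B u * exp (- c * \<bar>t\<bar>))"
    by (intro integrable_mult_left integrable_real_indicator) (simp_all add: emeasure_distr emeasure_eq_measure)
  ultimately have "norm (\<integral>\<omega>. complex_of_real (indicator (U_below n -` B \<inter> space M) \<omega>) * iexp (t * X [] \<omega>) \<partial>M)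
      \<le> (\<integral>u. indicator B u * exp (- c * \<bar>t\<bar>) \<partial>distr M (below_space n) (U_below n))"
    unfolding integral_iexp_root_below_event[OF B]
    by (intro order.trans[OF integral_norm_bound integral_mono']) auto
  also have "\<dots> = exp (- c * \<bar>t\<bar>) * prob (U_below n -` B \<inter> space M)"
    by (simp add: measure_distr)
  finally show ?thesis .
qed

definition below_algebra :: "nat \<Rightarrow> 'a measure" where
  "below_algebra n = vimage_algebra (space M) (U_below n) (below_space n)"

lemma sets_below_algebra:
  "sets (below_algebra n) = {U_below n -` B \<inter> space M | B. B \<in> sets (below_space n)}"
  unfolding below_algebra_def using measurable_space[OF U_below_measurable]
  by (intro sets_vimage_algebra2) auto

lemma space_below_algebra: "space (below_algebra n) = space M"
  by (simp add: below_algebra_def)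

lemma sets_below_algebra_subset: "sets (below_algebra n) \<subseteq> sets M"
  unfolding sets_below_algebra by auto

lemma sets_below_algebra_mono:
  assumes "n \<le> k" shows "sets (below_algebra n) \<subseteq> sets (below_algebra k)"
proof
  fix A assume "A \<in> sets (below_algebra n)"
  then obtain B where B: "B \<in> sets (below_space n)" and A: "A = U_below n -` B \<inter> space M"
    by (auto simp: sets_below_algebra)
  have "below_generation n \<subseteq> below_generation k"
    using assms by (auto simp: below_generation_def)
  then have "(\<lambda>u. restrict u (below_generation n)) -` B \<inter> space (below_space k) \<in> sets (below_space k)"
    using B by (intro measurable_sets[OF measurable_restrict_subset])
  moreover have "restrict (U_below k \<omega>) (below_generation n) = U_below n \<omega>" for \<omega>
    using assms by (auto simp: U_below_def below_generation_def fun_eq_iff)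
  then have "A = U_below k -` ((\<lambda>u. restrict u (below_generation n)) -` B \<inter> space (below_space k)) \<inter> space M"
    unfolding A using measurable_space[OF U_below_measurable[of k]] by auto
  ultimately show "A \<in> sets (below_algebra k)"
    unfolding sets_below_algebra by blast
qed

lemma sets_U_sigma: "sets (U_sigma M U) = sigma_sets (space M) {U i -` B \<inter> space M | i B. B \<in> sets borel}"
  unfolding U_sigma_def by (rule sets_measure_of) auto

lemma space_U_sigma: "space (U_sigma M U) = space M"
  unfolding U_sigma_def by (rule space_measure_of) auto

lemma subalgebra_U_sigma: "subalgebra M (U_sigma M U)"
  unfolding subalgebra_def space_U_sigma sets_U_sigma
  by (auto intro!: sets.sigma_sets_subset)

lemma U_measurable_U_sigma: "U i \<in> borel_measurable (U_sigma M U)"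
proof (rule measurableI)
  fix B :: "real set" assume "B \<in> sets borel"
  then show "U i -` B \<inter> space (U_sigma M U) \<in> sets (U_sigma M U)"
    unfolding sets_U_sigma space_U_sigma by (auto intro: sigma_sets.Basic)
qed (simp add: space_U_sigma)

lemma sets_U_sigma_subset_below_algebras:
  "sets (U_sigma M U) \<subseteq> sigma_sets (space M) (\<Union>n. sets (below_algebra n))"
  unfolding sets_U_sigma
proof (rule sigma_sets_mono, safe)
  fix i and B :: "real set" assume "B \<in> sets borel"
  then have "(\<lambda>u. u i) -` B \<inter> space (below_space (Suc (length i))) \<in> sets (below_space (Suc (length i)))"
    by (intro measurable_sets[OF measurable_component_singleton]) (auto simp: below_generation_def)
  moreover have "U i -` B \<inter> space M
      = U_below (Suc (length i)) -` ((\<lambda>u. u i) -` B \<inter> space (below_space (Suc (length i)))) \<inter> space M"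
    using measurable_space[OF U_below_measurable[of "Suc (length i)"]]
    by (auto simp: U_below_def below_generation_def)
  ultimately show "U i -` B \<inter> space M \<in> sigma_sets (space M) (\<Union>n. sets (below_algebra n))"
    unfolding sets_below_algebra by blast
qed

lemma U_sigma_approx_by_below_event:
  assumes "S \<in> sets (U_sigma M U)" "e > 0"
  obtains n B where "B \<in> sets (below_space n)" "prob (sym_diff S (U_below n -` B \<inter> space M)) < e"
  using sigma_sets_UN_incseq_approx[OF sets_below_algebra_subset space_below_algebra
      sets_below_algebra_mono subsetD[OF sets_U_sigma_subset_below_algebras]] assms
  unfolding sets_below_algebra by blast

lemma norm_integral_iexp_U_sigma_event_le:
  assumes char_decay: "\<And>s. norm (char mu s) \<le> exp (- c * \<bar>s\<bar>)" and "c \<ge> 0"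
    and g: "g \<in> borel_measurable (U_sigma M U)" and root: "AE \<omega> in M. X [] \<omega> = g \<omega>"
    and S: "S \<in> sets (U_sigma M U)"
  shows "norm (\<integral>\<omega>. complex_of_real (indicator S \<omega>) * iexp (t * g \<omega>) \<partial>M) \<le> exp (- c * \<bar>t\<bar>) * prob S"
proof (rule field_le_epsilon)
  fix \<epsilon> :: real assume "\<epsilon> > 0"
  let ?I = "\<lambda>A. \<integral>\<omega>. complex_of_real (indicator A \<omega>) * iexp (t * g \<omega>) \<partial>M"
  let ?e = "exp (- c * \<bar>t\<bar>)"
  have [measurable]: "g \<in> borel_measurable M"
    using g subalgebra_U_sigma by (rule measurable_from_subalg[rotated])
  have [measurable]: "S \<in> sets M"
    using S subalgebra_U_sigma by (auto simp: subalgebra_def)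
  obtain n B where B: "B \<in> sets (below_space n)"
    and close: "prob (sym_diff S (U_below n -` B \<inter> space M)) < \<epsilon> / 2"
    using U_sigma_approx_by_below_event[OF S half_gt_zero[OF \<open>\<epsilon> > 0\<close>]] by blast
  define A where "A = U_below n -` B \<inter> space M"
  have [measurable]: "A \<in> sets M"
    unfolding A_def using B by measurable
  have "?I A = (\<integral>\<omega>. complex_of_real (indicator A \<omega>) * iexp (t * X [] \<omega>) \<partial>M)"
    using root by (intro integral_cong_AE) auto
  then have "norm (?I A) \<le> ?e * prob A"
    unfolding A_def using norm_integral_iexp_root_below_event_le[OF char_decay B] by simp
  moreover have "norm (?I S - ?I A) \<le> prob (sym_diff S A)"
    by (intro norm_integral_indicator_diff_le) auto
  moreover have "prob A \<le> prob S + prob (sym_diff S A)"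
    by (intro order.trans[OF finite_measure_mono measure_Un_le]) auto
  then have "?e * prob A \<le> ?e * prob S + ?e * prob (sym_diff S A)"
    by (metis distrib_left exp_ge_zero mult_left_mono)
  moreover have "?e * prob (sym_diff S A) \<le> prob (sym_diff S A)"
    using \<open>c \<ge> 0\<close> by (intro mult_left_le_one_le) auto
  ultimately have "norm (?I S) \<le> ?e * prob S + 2 * prob (sym_diff S A)"
    using norm_triangle_sub[of "?I S" "?I A"] by linarith
  then show "norm (?I S) \<le> ?e * prob S + \<epsilon>"
    using close by (simp add: A_def)
qed

text \<open>On S = {Re (z * iexp (g / c)) \<ge> 1/2} the bound forces P S / 2 \<le> exp (-1) P S, so P S = 0.\<close>

lemma AE_Re_iexp_U_sigma_less_half:
  assumes char_decay: "\<And>s. norm (char mu s) \<le> exp (- c * \<bar>s\<bar>)" and "c > 0"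
    and g [measurable]: "g \<in> borel_measurable (U_sigma M U)" and root: "AE \<omega> in M. X [] \<omega> = g \<omega>"
    and z: "norm z = 1"
  shows "AE \<omega> in M. Re (z * iexp (g \<omega> / c)) < 1/2"
proof (rule AE_less_of_set_integral_le[OF subalgebra_U_sigma _ _ _ exp_minus_one_less_half])
  have "\<bar>Re (z * iexp (g \<omega> / c))\<bar> \<le> 1" for \<omega>
  proof -
    have "\<bar>Re (z * iexp (g \<omega> / c))\<bar> \<le> norm (z * iexp (g \<omega> / c))" by (rule abs_Re_le_cmod)
    also have "\<dots> = 1" using z by (simp add: norm_mult)
    finally show ?thesis .
  qed
  moreover show "(\<lambda>\<omega>. Re (z * iexp (g \<omega> / c))) \<in> borel_measurable (U_sigma M U)" by measurable
  ultimately show "integrable M (\<lambda>\<omega>. Re (z * iexp (g \<omega> / c)))"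
    by (intro integrable_const_bound[where B=1] measurable_from_subalg[OF subalgebra_U_sigma] AE_I2)
      (simp_all only: real_norm_def)
  fix S assume S: "S \<in> sets (U_sigma M U)"
  then have [measurable]: "S \<in> sets M"
    using subalgebra_U_sigma by (auto simp: subalgebra_def)
  have [measurable]: "g \<in> borel_measurable M"
    using g subalgebra_U_sigma by (rule measurable_from_subalg[rotated])
  let ?I = "\<integral>\<omega>. complex_of_real (indicator S \<omega>) * iexp ((1 / c) * g \<omega>) \<partial>M"
  have "integrable M (\<lambda>\<omega>. complex_of_real (indicator S \<omega>) * iexp ((1 / c) * g \<omega>))"
    by (intro integrable_const_bound[where B=1]) (auto simp: norm_mult indicator_def)
  then have "Re (z * ?I) = (\<integral>\<omega>. Re (z * (complex_of_real (indicator S \<omega>) * iexp ((1 / c) * g \<omega>))) \<partial>M)"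
    by (simp only: integral_Re integrable_mult_right integral_mult_right_zero)
  also have "\<dots> = (\<integral>\<omega>. indicator S \<omega> * Re (z * iexp (g \<omega> / c)) \<partial>M)"
    by (intro Bochner_Integration.integral_cong) (auto simp: indicator_def)
  finally have "(\<integral>\<omega>. indicator S \<omega> * Re (z * iexp (g \<omega> / c)) \<partial>M) = Re (z * ?I)" ..
  also have "\<dots> \<le> norm (z * ?I)" by (rule complex_Re_le_cmod)
  also have "\<dots> = norm ?I" by (simp only: norm_mult z mult_1)
  also have "\<dots> \<le> exp (-1) * prob S"
    using norm_integral_iexp_U_sigma_event_le[OF char_decay less_imp_le[OF \<open>c > 0\<close>] g root S, of "1 / c"]
      \<open>c > 0\<close> by simp
  finally show "(\<integral>\<omega>. indicator S \<omega> * Re (z * iexp (g \<omega> / c)) \<partial>M) \<le> exp (-1) * prob S" .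
qed

lemma not_endogenous_if_char_decay:
  assumes char_decay: "\<And>s. norm (char mu s) \<le> exp (- c * \<bar>s\<bar>)" and "c > 0"
  shows "\<not> endogenous M U X"
proof
  assume "endogenous M U X"
  then obtain g where g: "g \<in> borel_measurable (U_sigma M U)" and root: "AE \<omega> in M. X [] \<omega> = g \<omega>"
    unfolding endogenous_def by blast
  note AE_Re = AE_Re_iexp_U_sigma_less_half[OF char_decay \<open>c > 0\<close> g root]
  have "norm (1::complex) = 1" "norm (-1::complex) = 1" "norm \<i> = 1" "norm (-\<i>) = 1"
    by simp_all
  from this[THEN AE_Re] have "AE \<omega> in M. \<bar>cos (g \<omega> / c)\<bar> < 1/2 \<and> \<bar>sin (g \<omega> / c)\<bar> < 1/2"
    by eventually_elim (simp add: Re_exp Im_exp, arith)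
  then have "AE \<omega> in M. False"
  proof eventually_elim
    case (elim \<omega>)
    then show False using one_le_abs_cos_plus_abs_sin[of "g \<omega> / c"] by linarith
  qed
  then show False by simp
qed

end

section \<open>Finite variance gives endogeny\<close>

lemma integral_unif01_branch_weight_squares:
  "(\<integral>x. (branch_weight x False)\<^sup>2 + (branch_weight x True)\<^sup>2 \<partial>unif01) = 2/3"
proof -
  let ?q = "\<lambda>x. (branch_weight x False)\<^sup>2 + (branch_weight x True)\<^sup>2"
  let ?F = "\<lambda>x::real. x^3/3 - (1 - x)^3/3"
  have "((\<lambda>x. x\<^sup>2 + (1 - x)\<^sup>2) has_integral (?F 1 - ?F 0)) {0..1::real}"
  proof (rule fundamental_theorem_of_calculus)
    fix x :: real assume "x \<in> {0..1}"
    show "(?F has_vector_derivative (x\<^sup>2 + (1 - x)\<^sup>2)) (at x within {0..1})"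
      unfolding has_real_derivative_iff_has_vector_derivative[symmetric]
      by (auto intro!: derivative_eq_intros simp: power2_eq_square)
  qed simp
  then have "((\<lambda>x. x\<^sup>2 + (1 - x)\<^sup>2) has_integral 2/3) {0..1::real}"
    by simp
  then have "(?q has_integral 2/3) {0..1::real}"
    by (rule has_integral_eq[rotated]) (simp add: branch_weight_def clamp01_id)
  then have "(\<integral>\<^sup>+x. ennreal (?q x) * indicator {0..1} x \<partial>lborel) = ennreal (2/3)"
    by (intro nn_integral_has_integral_lebesgue') auto
  then have "(\<integral>\<^sup>+x. ennreal (?q x) \<partial>unif01) = ennreal (2/3)"
    unfolding unif01_def by (subst nn_integral_uniform_measure) (auto simp: divide_ennreal_def)
  then show ?thesis
    by (subst integral_eq_nn_integral) (auto simp: unif01_def)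
qed

context qs_rtp
begin

lemma integrable_path_weight_square: "integrable M (\<lambda>\<omega>. (path_weight (\<lambda>j. U j \<omega>) i)\<^sup>2)"
  using path_weight_nonneg path_weight_le_1
  by (intro integrable_const_bound[where B=1] borel_measurable_power path_weight_measurable)
    (auto simp: power_le_one)

lemma integral_path_weight_square_generation_Suc:
  assumes i: "i \<in> generation n"
  shows "(\<integral>\<omega>. (path_weight (\<lambda>j. U j \<omega>) (i @ [False]))\<^sup>2 + (path_weight (\<lambda>j. U j \<omega>) (i @ [True]))\<^sup>2 \<partial>M)
    = 2/3 * (\<integral>\<omega>. (path_weight (\<lambda>j. U j \<omega>) i)\<^sup>2 \<partial>M)"
proof -
  let ?q = "\<lambda>x. (branch_weight x False)\<^sup>2 + (branch_weight x True)\<^sup>2"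
  have [measurable]: "(\<lambda>u. (path_weight u i)\<^sup>2) \<in> borel_measurable (below_space n)"
    using i by (intro borel_measurable_power path_weight_measurable_below_space) (simp add: generation_def)
  have "indep_var (below_space n) (U_below n) (PiM {i} (\<lambda>_. borel)) (\<lambda>\<omega>. restrict (\<lambda>j. U j \<omega>) {i})"
    using i unfolding U_below_def by (intro indep_var_restrict[OF indep_U]) (auto simp: generation_def below_generation_def)
  then have "indep_var borel ((\<lambda>u. (path_weight u i)\<^sup>2) \<circ> U_below n) borel ((\<lambda>v. ?q (v i)) \<circ> (\<lambda>\<omega>. restrict (\<lambda>j. U j \<omega>) {i}))"
    by (rule indep_var_compose) measurable
  then have indep: "indep_var borel (\<lambda>\<omega>. (path_weight (\<lambda>j. U j \<omega>) i)\<^sup>2) borel (\<lambda>\<omega>. ?q (U i \<omega>))"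
    using i by (simp add: comp_def path_weight_U_below generation_def)
  have square_le_1: "(branch_weight x b)\<^sup>2 \<le> 1" for x b
    using branch_weight_bounds[of x b] by (simp add: power_le_one)
  have "\<bar>?q x\<bar> \<le> 2" for x
    using square_le_1[of x False] square_le_1[of x True] by simp
  then have integrable_q: "integrable M (\<lambda>\<omega>. ?q (U i \<omega>))"
    by (intro integrable_const_bound[where B=2]) auto
  have "(\<integral>\<omega>. ?q (U i \<omega>) \<partial>M) = 2/3"
    using integral_unif01_branch_weight_squares unfolding distr_U[of i, symmetric]
    by (simp add: integral_distr)
  then have "(\<integral>\<omega>. (path_weight (\<lambda>j. U j \<omega>) i)\<^sup>2 * ?q (U i \<omega>) \<partial>M)
      = 2/3 * (\<integral>\<omega>. (path_weight (\<lambda>j. U j \<omega>) i)\<^sup>2 \<partial>M)"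
    using indep_var_lebesgue_integral[OF indep integrable_path_weight_square integrable_q] by simp
  then show ?thesis
    by (simp add: path_weight_snoc power_mult_distrib distrib_left)
qed

lemma integral_sum_path_weight_squares:
  "(\<integral>\<omega>. (\<Sum>i\<in>generation n. (path_weight (\<lambda>j. U j \<omega>) i)\<^sup>2) \<partial>M) = (2/3)^n"
proof (induction n)
  case 0
  then show ?case by (simp add: generation_0 prob_space)
next
  case (Suc n)
  have "(\<integral>\<omega>. (\<Sum>i\<in>generation (Suc n). (path_weight (\<lambda>j. U j \<omega>) i)\<^sup>2) \<partial>M)
      = (\<Sum>i\<in>generation n. (\<integral>\<omega>. (path_weight (\<lambda>j. U j \<omega>) (i @ [False]))\<^sup>2
          + (path_weight (\<lambda>j. U j \<omega>) (i @ [True]))\<^sup>2 \<partial>M))"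
    unfolding sum_generation_Suc
    using integrable_path_weight_square by (simp add: Bochner_Integration.integral_sum)
  also have "\<dots> = 2/3 * (\<Sum>i\<in>generation n. (\<integral>\<omega>. (path_weight (\<lambda>j. U j \<omega>) i)\<^sup>2 \<partial>M))"
    by (simp add: integral_path_weight_square_generation_Suc sum_distrib_left)
  also have "\<dots> = (2/3)^Suc n"
    using Suc integrable_path_weight_square by (simp add: Bochner_Integration.integral_sum)
  finally show ?case .
qed

end

locale qs_rtp_finite_variance = qs_rtp +
  fixes m :: real
  assumes integrable_centered_square: "integrable mu (\<lambda>x. (x - m)\<^sup>2)"
    and integrable_centered: "integrable mu (\<lambda>x. x - m)"
    and mean_centered: "(\<integral>x. x - m \<partial>mu) = 0"
begin

definition var :: real where
  "var = (\<integral>x. (x - m)\<^sup>2 \<partial>mu)"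

lemma var_nonneg: "0 \<le> var"
  unfolding var_def by simp

lemma integrable_centered_X_square: "integrable M (\<lambda>\<omega>. (X i \<omega> - m)\<^sup>2)"
  using integrable_centered_square unfolding distr_X[of i, symmetric] by (simp add: integrable_distr_eq)

lemma integrable_centered_X: "integrable M (\<lambda>\<omega>. X i \<omega> - m)"
  using integrable_centered unfolding distr_X[of i, symmetric] by (simp add: integrable_distr_eq)

lemma integral_centered_X: "(\<integral>\<omega>. X i \<omega> - m \<partial>M) = 0"
  using mean_centered unfolding distr_X[of i, symmetric] by (simp add: integral_distr)

lemma integral_centered_X_square: "(\<integral>\<omega>. (X i \<omega> - m)\<^sup>2 \<partial>M) = var"
proof -
  have "(\<integral>\<omega>. (X i \<omega> - m)\<^sup>2 \<partial>M) = (\<integral>x. (x - m)\<^sup>2 \<partial>distr M borel (X i))"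
    by (simp add: integral_distr)
  then show ?thesis by (simp add: distr_X var_def)
qed

lemma integrable_centered_X_mult: "integrable M (\<lambda>\<omega>. (X i \<omega> - m) * (X j \<omega> - m))"
proof (rule Bochner_Integration.integrable_bound)
  show "integrable M (\<lambda>\<omega>. (X i \<omega> - m)\<^sup>2 + (X j \<omega> - m)\<^sup>2)"
    using integrable_centered_X_square by auto
  show "AE \<omega> in M. norm ((X i \<omega> - m) * (X j \<omega> - m)) \<le> norm ((X i \<omega> - m)\<^sup>2 + (X j \<omega> - m)\<^sup>2)"
  proof (intro AE_I2)
    fix \<omega>
    have "2 * \<bar>X i \<omega> - m\<bar> * \<bar>X j \<omega> - m\<bar> \<le> \<bar>X i \<omega> - m\<bar>\<^sup>2 + \<bar>X j \<omega> - m\<bar>\<^sup>2"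
      by (rule sum_squares_bound)
    moreover have "0 \<le> \<bar>X i \<omega> - m\<bar> * \<bar>X j \<omega> - m\<bar>" by simp
    ultimately have "\<bar>(X i \<omega> - m) * (X j \<omega> - m)\<bar> \<le> (X i \<omega> - m)\<^sup>2 + (X j \<omega> - m)\<^sup>2"
      by (simp only: abs_mult power2_abs)
    then show "norm ((X i \<omega> - m) * (X j \<omega> - m)) \<le> norm ((X i \<omega> - m)\<^sup>2 + (X j \<omega> - m)\<^sup>2)"
      by simp
  qed
qed simp

lemma integral_centered_X_mult:
  assumes "i \<in> generation n" "j \<in> generation n"
  shows "(\<integral>\<omega>. (X i \<omega> - m) * (X j \<omega> - m) \<partial>M) = (if i = j then var else 0)"
proof (cases "i = j")
  case True
  then show ?thesis using integral_centered_X_square[of i] by (simp add: power2_eq_square)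
next
  case False
  have "indep_var (PiM {i} (\<lambda>_. borel)) (\<lambda>\<omega>. restrict (\<lambda>k. X k \<omega>) {i}) (PiM {j} (\<lambda>_. borel)) (\<lambda>\<omega>. restrict (\<lambda>k. X k \<omega>) {j})"
    using indep_X_generation[of n] False assms by (intro indep_var_restrict) (auto simp: generation_def)
  then have "indep_var borel ((\<lambda>x. x i - m) \<circ> (\<lambda>\<omega>. restrict (\<lambda>k. X k \<omega>) {i})) borel ((\<lambda>x. x j - m) \<circ> (\<lambda>\<omega>. restrict (\<lambda>k. X k \<omega>) {j}))"
    by (rule indep_var_compose) measurable
  then have "indep_var borel (\<lambda>\<omega>. X i \<omega> - m) borel (\<lambda>\<omega>. X j \<omega> - m)"
    by (simp add: comp_def)
  then show ?thesis
    using indep_var_lebesgue_integral[OF _ integrable_centered_X integrable_centered_X] integral_centered_X False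
    by simp
qed

lemma
  shows integrable_weighted_generation_square:
      "integrable M (\<lambda>\<omega>. (\<Sum>i\<in>generation n. s i * (X i \<omega> - m))\<^sup>2)"
    and integral_weighted_generation_square:
      "(\<integral>\<omega>. (\<Sum>i\<in>generation n. s i * (X i \<omega> - m))\<^sup>2 \<partial>M) = var * (\<Sum>i\<in>generation n. (s i)\<^sup>2)"
proof -
  have square: "(\<Sum>i\<in>generation n. s i * (X i \<omega> - m))\<^sup>2
      = (\<Sum>i\<in>generation n. \<Sum>j\<in>generation n. s i * s j * ((X i \<omega> - m) * (X j \<omega> - m)))" for \<omega>
    by (simp add: power2_eq_square sum_product algebra_simps)
  show "integrable M (\<lambda>\<omega>. (\<Sum>i\<in>generation n. s i * (X i \<omega> - m))\<^sup>2)"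
    unfolding square by (intro Bochner_Integration.integrable_sum integrable_mult_right integrable_centered_X_mult)
  have "(\<integral>\<omega>. (\<Sum>i\<in>generation n. s i * (X i \<omega> - m))\<^sup>2 \<partial>M)
      = (\<Sum>i\<in>generation n. \<Sum>j\<in>generation n. s i * s j * (if i = j then var else 0))"
    unfolding square using integrable_centered_X_mult
    by (simp add: Bochner_Integration.integral_sum integral_centered_X_mult cong: sum.cong)
  also have "\<dots> = var * (\<Sum>i\<in>generation n. (s i)\<^sup>2)"
    by (simp add: if_distrib sum.delta sum_distrib_left power2_eq_square mult.commute cong: if_cong)
  finally show "(\<integral>\<omega>. (\<Sum>i\<in>generation n. s i * (X i \<omega> - m))\<^sup>2 \<partial>M) = var * (\<Sum>i\<in>generation n. (s i)\<^sup>2)" .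
qed

lemma AE_root_deviation_eq:
  "AE \<omega> in M. X [] \<omega> - m - accumulated_toll (\<lambda>j. U j \<omega>) n
     = (\<Sum>i\<in>generation n. path_weight (U_below n \<omega>) i * (X_generation n \<omega> i - m))"
  using AE_root_eq_below_generation[of n]
proof eventually_elim
  case (elim \<omega>)
  have "(\<Sum>i\<in>generation n. path_weight (U_below n \<omega>) i * (X_generation n \<omega> i - m))
      = (\<Sum>i\<in>generation n. path_weight (U_below n \<omega>) i * X_generation n \<omega> i)
        - (\<Sum>i\<in>generation n. path_weight (U_below n \<omega>) i) * m"
    by (simp add: right_diff_distrib sum_subtractf sum_distrib_right)
  then show ?case
    using elim by (simp add: sum_path_weight_generation accumulated_toll_U_below)
qed

lemma nn_integral_root_deviation_square:
  "(\<integral>\<^sup>+\<omega>. ennreal ((X [] \<omega> - m - accumulated_toll (\<lambda>j. U j \<omega>) n)\<^sup>2) \<partial>M) = ennreal (var * (2/3)^n)"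
proof -
  define F where "F p = ennreal ((\<Sum>i\<in>generation n. path_weight (snd p) i * (fst p i - m))\<^sup>2)"
    for p :: "(bool list \<Rightarrow> real) \<times> (bool list \<Rightarrow> real)"
  have [measurable]: "(\<lambda>u. path_weight u i) \<in> borel_measurable (below_space n)" if "i \<in> generation n" for i
    using that by (intro path_weight_measurable_below_space) (simp add: generation_def)
  have F_measurable [measurable]: "F \<in> borel_measurable (generation_space n \<Otimes>\<^sub>M below_space n)"
    unfolding F_def by measurable
  have "(\<integral>\<^sup>+\<omega>. ennreal ((X [] \<omega> - m - accumulated_toll (\<lambda>j. U j \<omega>) n)\<^sup>2) \<partial>M)
      = (\<integral>\<^sup>+\<omega>. F (X_generation n \<omega>, U_below n \<omega>) \<partial>M)"
    using AE_root_deviation_eq[of n] by (intro nn_integral_cong_AE) (auto simp: F_def elim!: eventually_mono)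
  also have "\<dots> = (\<integral>\<^sup>+u. (\<integral>\<^sup>+\<omega>. F (X_generation n \<omega>, u) \<partial>M) \<partial>distr M (below_space n) (U_below n))"
    by (rule nn_integral_indep_var[OF indep_var_X_generation_U_below F_measurable])
  also have "\<dots> = (\<integral>\<^sup>+u. ennreal (var * (\<Sum>i\<in>generation n. (path_weight u i)\<^sup>2)) \<partial>distr M (below_space n) (U_below n))"
    by (intro nn_integral_cong)
      (simp add: F_def X_generation_def nn_integral_eq_integral integrable_weighted_generation_square
        integral_weighted_generation_square)
  also have "\<dots> = (\<integral>\<^sup>+\<omega>. ennreal (var * (\<Sum>i\<in>generation n. (path_weight (\<lambda>j. U j \<omega>) i)\<^sup>2)) \<partial>M)"
    by (simp add: nn_integral_distr path_weight_U_below generation_def)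
  also have "\<dots> = ennreal (\<integral>\<omega>. var * (\<Sum>i\<in>generation n. (path_weight (\<lambda>j. U j \<omega>) i)\<^sup>2) \<partial>M)"
    using integrable_path_weight_square
    by (intro nn_integral_eq_integral AE_I2 mult_nonneg_nonneg sum_nonneg var_nonneg) auto
  also have "\<dots> = ennreal (var * (2/3)^n)"
    by (simp add: integral_sum_path_weight_squares)
  finally show ?thesis .
qed

text \<open>The squared deviations have summable expectations, hence are almost surely summable.\<close>

lemma AE_accumulated_toll_tendsto_root:
  "AE \<omega> in M. (\<lambda>n. accumulated_toll (\<lambda>j. U j \<omega>) n + m) \<longlonglongrightarrow> X [] \<omega>"
proof -
  define D where "D n \<omega> = (X [] \<omega> - m - accumulated_toll (\<lambda>j. U j \<omega>) n)\<^sup>2" for n \<omega>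
  have D_measurable: "(\<lambda>\<omega>. ennreal (D n \<omega>)) \<in> borel_measurable M" for n
    unfolding D_def by (intro measurable_compose[OF _ measurable_ennreal] borel_measurable_power
        borel_measurable_diff accumulated_toll_measurable) auto
  have "(\<integral>\<^sup>+\<omega>. (\<Sum>n. ennreal (D n \<omega>)) \<partial>M) = (\<Sum>n. ennreal (var * (2/3)^n))"
    using D_measurable by (simp add: nn_integral_suminf D_def nn_integral_root_deviation_square)
  also have "\<dots> = ennreal (\<Sum>n. var * (2/3)^n)"
    using var_nonneg by (intro suminf_ennreal2 summable_mult summable_geometric) auto
  finally have "AE \<omega> in M. (\<Sum>n. ennreal (D n \<omega>)) \<noteq> \<infinity>"
    using D_measurable by (intro nn_integral_noteq_infinite) auto
  then show ?thesis
  proof eventually_elim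
    case (elim \<omega>)
    then have "summable (\<lambda>n. D n \<omega>)"
      by (intro summable_suminf_not_top) (auto simp: D_def)
    then have "(\<lambda>n. sqrt (D n \<omega>)) \<longlonglongrightarrow> sqrt 0"
      by (intro tendsto_real_sqrt summable_LIMSEQ_zero)
    then have "(\<lambda>n. X [] \<omega> - m - accumulated_toll (\<lambda>j. U j \<omega>) n) \<longlonglongrightarrow> 0"
      by (simp add: D_def tendsto_rabs_zero_iff)
    then have "(\<lambda>n. X [] \<omega> - (X [] \<omega> - m - accumulated_toll (\<lambda>j. U j \<omega>) n)) \<longlonglongrightarrow> X [] \<omega> - 0"
      by (intro tendsto_diff tendsto_const)
    then show ?case by (simp add: add.commute)
  qed
qed

lemma endogenous_if_finite_variance: "endogenous M U X"
proof -
  define g where "g \<omega> = lim (\<lambda>n. accumulated_toll (\<lambda>j. U j \<omega>) n + m)" for \<omega>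
  have "g \<in> borel_measurable (U_sigma M U)"
    unfolding g_def
    by (intro borel_measurable_lim_metric borel_measurable_add accumulated_toll_measurable
        U_measurable_U_sigma borel_measurable_const)
  moreover have "AE \<omega> in M. X [] \<omega> = g \<omega>"
    using AE_accumulated_toll_tendsto_root by eventually_elim (simp add: g_def limI)
  ultimately show ?thesis
    unfolding endogenous_def by blast
qed

end

lemma (in qs_rtp) qs_rtp_finite_variance_shift:
  assumes nu: "real_distribution \<nu>" and mu: "mu = distr \<nu> borel (\<lambda>x. x + m)"
    and moments: "integrable \<nu> (\<lambda>x. x)" "(\<integral>x. x \<partial>\<nu>) = 0" "integrable \<nu> (\<lambda>x. x\<^sup>2)"
  shows "qs_rtp_finite_variance M U X mu m"
proof unfold_locales
  have [measurable]: "(\<lambda>x. x + m) \<in> borel_measurable \<nu>"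
    using real_distribution.events_eq_borel[OF nu] by (simp add: measurable_cong_sets[of \<nu> borel])
  have "integrable mu (\<lambda>x. (x - m)\<^sup>2) \<longleftrightarrow> integrable \<nu> (\<lambda>x. (x + m - m)\<^sup>2)"
    "integrable mu (\<lambda>x. x - m) \<longleftrightarrow> integrable \<nu> (\<lambda>x. x + m - m)"
    unfolding mu by (intro integrable_distr_eq; measurable)+
  moreover have "(\<integral>x. x - m \<partial>mu) = (\<integral>x. x + m - m \<partial>\<nu>)"
    unfolding mu by (intro integral_distr) measurable
  ultimately show "integrable mu (\<lambda>x. (x - m)\<^sup>2)" "integrable mu (\<lambda>x. x - m)" "(\<integral>x. x - m \<partial>mu) = 0"
    using moments by simp_all
qed

section \<open>Convolution with a Cauchy law\<close>

lemma char_convolution: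
  assumes "real_distribution N1" "real_distribution N2"
  shows "char (N1 \<star> N2) s = char N1 s * char N2 s"
proof -
  interpret N1: real_distribution N1 by fact
  interpret N2: real_distribution N2 by fact
  interpret P: pair_prob_space N1 N2 ..
  have sets_P: "sets (N1 \<Otimes>\<^sub>M N2) = sets (borel \<Otimes>\<^sub>M borel)"
    by (intro sets_pair_measure_cong) simp_all
  have sum_measurable: "(\<lambda>z::real \<times> real. fst z + snd z) \<in> borel_measurable (N1 \<Otimes>\<^sub>M N2)"
    using measurable_cong_sets[OF sets_P refl] by measurable
  have "(\<lambda>z::real \<times> real. iexp (s * fst z) * iexp (s * snd z)) \<in> borel_measurable (N1 \<Otimes>\<^sub>M N2)"
    using measurable_cong_sets[OF sets_P refl] by measurable
  then have integrable: "integrable (N1 \<Otimes>\<^sub>M N2) (\<lambda>(x, y). iexp (s * x) * iexp (s * y))"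
    by (intro P.integrable_const_bound[where B=1]) (auto simp: norm_mult split_beta')
  have "char (N1 \<star> N2) s = (\<integral>z. iexp (s * (fst z + snd z)) \<partial>(N1 \<Otimes>\<^sub>M N2))"
    unfolding char_def convolution_def using sum_measurable by (subst integral_distr) (auto simp: split_beta')
  also have "\<dots> = (\<integral>z. (\<lambda>(x, y). iexp (s * x) * iexp (s * y)) z \<partial>(N1 \<Otimes>\<^sub>M N2))"
    by (intro Bochner_Integration.integral_cong refl) (auto simp: distrib_left exp_add algebra_simps)
  also have "\<dots> = (\<integral>x. (\<integral>y. iexp (s * x) * iexp (s * y) \<partial>N2) \<partial>N1)"
    using P.integral_fst[of "\<lambda>x y. iexp (s * x) * iexp (s * y)"] integrable by simp
  also have "\<dots> = char N1 s * char N2 s"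
    unfolding char_def by simp
  finally show ?thesis .
qed

lemma norm_char_convolution_cauchy_le:
  assumes "real_distribution \<nu>" "is_cauchy m \<sigma> K"
  shows "norm (char (\<nu> \<star> K) s) \<le> exp (- \<sigma> * \<bar>s\<bar>)"
proof -
  have "norm (char (\<nu> \<star> K) s) = norm (char \<nu> s) * exp (- \<sigma> * \<bar>s\<bar>)"
    using assms by (simp add: char_convolution is_cauchy_def norm_mult)
  also have "\<dots> \<le> exp (- \<sigma> * \<bar>s\<bar>)"
    using real_distribution.cmod_char_le_1[OF assms(1)] by (simp add: mult_left_le_one_le)
  finally show ?thesis .
qed

lemma is_cauchy_0_eq_return: "is_cauchy m 0 K \<Longrightarrow> K = return borel m"
  unfolding is_cauchy_def
  by (intro Levy_uniqueness) (auto simp: real_distribution_def real_distribution_axioms_def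
      prob_space_return char_def integral_return algebra_simps)

lemma convolution_return:
  assumes "real_distribution N"
  shows "N \<star> return borel m = distr N borel (\<lambda>x. x + m)"
proof (rule measure_eqI)
  interpret real_distribution N by fact
  fix A assume "A \<in> sets (N \<star> return borel m)"
  then have [measurable]: "A \<in> sets borel" by simp
  have "emeasure (N \<star> return borel m) A = (\<integral>\<^sup>+x. \<integral>\<^sup>+y. indicator A (x + y) \<partial>return borel m \<partial>N)"
    by (intro convolution_emeasure' finite_measure_axioms prob_space.finite_measure prob_space_return) auto
  also have "\<dots> = (\<integral>\<^sup>+x. indicator ((\<lambda>x. x + m) -` A) x \<partial>N)"
    by (intro nn_integral_cong) (simp add: nn_integral_return indicator_def)
  also have "\<dots> = emeasure N ((\<lambda>x. x + m) -` A)"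
    using measurable_sets[of "\<lambda>x::real. x + m" borel borel A] by (intro nn_integral_indicator) simp
  also have "\<dots> = emeasure (distr N borel (\<lambda>x. x + m)) A"
    by (simp add: emeasure_distr)
  finally show "emeasure (N \<star> return borel m) A = emeasure (distr N borel (\<lambda>x. x + m)) A" .
qed simp

theorem theorem21:
  fixes \<nu> K :: "real measure" and m \<sigma> :: real
    and M :: "'a measure" and U X :: "bool list \<Rightarrow> 'a \<Rightarrow> real"
  assumes nu_fix: "QS_fixpoint \<nu>"
    and nu_mean: "integrable \<nu> (\<lambda>x. x)" "(\<integral>x. x \<partial>\<nu>) = 0"
    and nu_var: "integrable \<nu> (\<lambda>x. x\<^sup>2)"
    and sigma_nonneg: "\<sigma> \<ge> 0"
    and K: "is_cauchy m \<sigma> K"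
    and RTP: "invariant_RTP M U X (\<nu> \<star> K)"
  shows "endogenous M U X \<longleftrightarrow> \<sigma> = 0"
proof -
  have nu: "real_distribution \<nu>"
    using nu_fix by (simp add: QS_fixpoint_def)
  interpret qs_rtp M U X "\<nu> \<star> K"
    using RTP by (rule invariant_RTP_imp_qs_rtp)
  show ?thesis
  proof
    assume "endogenous M U X"
    then show "\<sigma> = 0"
      using not_endogenous_if_char_decay[OF norm_char_convolution_cauchy_le[OF nu K]] sigma_nonneg
      by force
  next
    assume "\<sigma> = 0"
    then have "K = return borel m"
      using K is_cauchy_0_eq_return by blast
    then have "\<nu> \<star> K = distr \<nu> borel (\<lambda>x. x + m)"
      by (simp add: convolution_return[OF nu])
    then interpret qs_rtp_finite_variance M U X "\<nu> \<star> K" m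
      using qs_rtp_finite_variance_shift[OF nu _ nu_mean nu_var] by simp
    show "endogenous M U X"
      by (rule endogenous_if_finite_variance)
  qed
qed

end
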